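(* Let $1\le r\le s\le t$ and let $u=ABCd$, $v=A'B'C'd'$ be vertices of $E3C(r,s,t)$ with $A\ne A'$, $B\ne B'$, $C\ne C'$ and $d=d'$ (any $d\in\{0,1,2\}$). Then there exist $2r+2$ pairwise internally disjoint $u$–$v$ paths in $E3C(r,s,t)$, each of length at most $r+s+t+4$.
   Context: The exchanged 3-ary $n$-cube $E3C(r,s,t)$ ($r,s,t\ge1$, $n=r+s+t+1$): vertices are strings written $x=ABCd$ with $A\in\{0,1,2\}^r$, $B\in\{0,1,2\}^s$, $C\in\{0,1,2\}^t$, $d\in\{0,1,2\}$. Two distinct vertices $x=ABCd$, $y=A'B'C'd'$ are adjacent iff one of: (E0) $A=A',B=B',C=C'$ and $d\ne d'$; (E1) $d=d'=0$, $A=A'$, $B=B'$ and $C,C'$ differ in exactly one position; (E2) $d=d'=1$, $A=A'$, $C=C'$ and $B,B'$ differ in exactly one position; (E3) $d=d'=2$, $B=B'$, $C=C'$ and $A,A'$ differ in exactly one position. Paths are internally disjoint if they share no vertices other than their endpoints; length = number of edges. *)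

theory Defs
  imports Main
begin

type_synonym e3c_vertex = "nat list \<times> nat list \<times> nat list \<times> nat"

definition tern_str :: "nat \<Rightarrow> nat list \<Rightarrow> bool" where
  "tern_str k X \<longleftrightarrow> length X = k \<and> (\<forall>x\<in>set X. x < 3)"

definition e3c_verts :: "nat \<Rightarrow> nat \<Rightarrow> nat \<Rightarrow> e3c_vertex set" where
  "e3c_verts r s t = {(A,B,C,d). tern_str r A \<and> tern_str s B \<and> tern_str t C \<and> d < 3}"

definition differ_one :: "nat list \<Rightarrow> nat list \<Rightarrow> bool" where
  "differ_one X Y \<longleftrightarrow> length X = length Y \<and> card {i. i < length X \<and> X ! i \<noteq> Y ! i} = 1"

definition e3c_adj :: "nat \<Rightarrow> nat \<Rightarrow> nat \<Rightarrow> e3c_vertex \<Rightarrow> e3c_vertex \<Rightarrow> bool" where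
  "e3c_adj r s t x y \<longleftrightarrow> x \<in> e3c_verts r s t \<and> y \<in> e3c_verts r s t \<and> x \<noteq> y \<and>
     (case x of (A,B,C,d) \<Rightarrow> case y of (A',B',C',d') \<Rightarrow>
        (A = A' \<and> B = B' \<and> C = C' \<and> d \<noteq> d') \<or>
        (d = 0 \<and> d' = 0 \<and> A = A' \<and> B = B' \<and> differ_one C C') \<or>
        (d = 1 \<and> d' = 1 \<and> A = A' \<and> C = C' \<and> differ_one B B') \<or>
        (d = 2 \<and> d' = 2 \<and> B = B' \<and> C = C' \<and> differ_one A A'))"

definition e3c_path :: "nat \<Rightarrow> nat \<Rightarrow> nat \<Rightarrow> e3c_vertex \<Rightarrow> e3c_vertex \<Rightarrow> e3c_vertex list \<Rightarrow> bool" where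
  "e3c_path r s t u v p \<longleftrightarrow> p \<noteq> [] \<and> hd p = u \<and> last p = v \<and> distinct p \<and>
     set p \<subseteq> e3c_verts r s t \<and> (\<forall>i. Suc i < length p \<longrightarrow> e3c_adj r s t (p ! i) (p ! Suc i))"

definition path_len :: "'a list \<Rightarrow> nat" where
  "path_len p = length p - 1"

definition interior :: "'a list \<Rightarrow> 'a set" where
  "interior p = set (butlast (tl p))"

definition internally_disjoint :: "'a list \<Rightarrow> 'a list \<Rightarrow> bool" where
  "internally_disjoint p q \<longleftrightarrow> interior p \<inter> interior q = {}"

end

theory Submission
  imports Defs
begin

text \<open>
  Exchanging \<open>A\<close> with \<open>C\<close>, or \<open>A\<close>
  with \<open>B\<close>, and relabelling the levels maps an exchanged 3-ary cube isomorphically onto one with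
  permuted dimensions. So it suffices to find \<open>2 r + 2\<close> paths between vertices of level 2 of
  \<open>E3C(r, s, t)\<close> for arbitrary \<open>r, s, t\<close>; at levels 0 and 1 this yields \<open>2 t + 2\<close> and
  \<open>2 s + 2\<close> paths, enough because \<open>r \<le> s \<le> t\<close>.

  In the ternary Hamming graph on strings of length \<open>r\<close>, every neighbour of \<open>A\<close> starts an
  \<open>A\<close>-\<open>A'\<close> route with at most \<open>r\<close> interior strings, and these routes are pairwise disjoint:
  for a position \<open>i\<close> and a symbol \<open>b\<close> differing from \<open>A ! i\<close> and \<open>A' ! i\<close>, the route from
  \<open>A[i := b]\<close> to \<open>A'[i := b]\<close>, all of whose strings carry \<open>b\<close> at \<open>i\<close>; and for every rotation of
  the list of positions where \<open>A\<close> and \<open>A'\<close> differ, the route flipping them in that order. If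
  \<open>A\<close> and \<open>A'\<close> are adjacent the flipping route is empty, leaving \<open>2 r - 1\<close> routes. A route
  ending in \<open>P\<close> is completed to a \<open>u\<close>-\<open>v\<close> path by changing \<open>C\<close> at level 0 and \<open>B\<close> at level 1
  while keeping \<open>P\<close>, and returning through \<open>(P, B', C', 2)\<close>; distinct routes end in distinct
  strings \<open>P\<close>, which keeps the completed paths disjoint. Two further paths (three if \<open>A\<close> and
  \<open>A'\<close> are adjacent) leave level 2 at once.
\<close>

lemma successively_upt:
  "(\<And>k. a \<le> k \<Longrightarrow> Suc k < b \<Longrightarrow> P k (Suc k)) \<Longrightarrow> successively P [a..<b]"
  by (auto simp: successively_conv_nth add.commute)

lemma distinct_concat_map:
  assumes "distinct xs" "\<And>x. x \<in> set xs \<Longrightarrow> distinct (f x)"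
    and "\<And>x y. x \<in> set xs \<Longrightarrow> y \<in> set xs \<Longrightarrow> x \<noteq> y \<Longrightarrow> set (f x) \<inter> set (f y) = {}"
  shows "distinct (concat (map f xs))"
  using assms by (induction xs) auto

lemma distinct_concat_imp_disjoint:
  "distinct (concat xs) \<Longrightarrow> ys \<in> set xs \<Longrightarrow> zs \<in> set xs \<Longrightarrow> ys \<noteq> zs \<Longrightarrow> set ys \<inter> set zs = {}"
  by (simp add: distinct_concat_iff)

lemma distinct_concat_imp_distinct:
  "distinct (concat xs) \<Longrightarrow> [] \<notin> set xs \<Longrightarrow> distinct xs"
  by (metis distinct_concat_iff removeAll_id)

lemma nth_in_set_take: "distinct xs \<Longrightarrow> i < length xs \<Longrightarrow> xs ! i \<in> set (take k xs) \<longleftrightarrow> i < k"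
  by (auto simp: in_set_conv_nth nth_eq_iff_index_eq)

text \<open>A nonempty proper prefix of a rotation contains its first element but not its last one,
  the cyclic predecessor of the first; so the prefix determines the rotation.\<close>

lemma set_take_rotate_inj:
  assumes xs: "distinct xs" and p: "p < length xs" "p' < length xs"
    and k: "0 < k" "k < length xs" "k' < length xs"
    and eq: "set (take k (rotate p xs)) = set (take k' (rotate p' xs))"
  shows "p = p'"
proof -
  let ?n = "length xs"
  have "rotate p xs ! 0 \<in> set (take k (rotate p xs))"
    using k xs nth_in_set_take[of "rotate p xs" 0 k] by fastforce
  then have "xs ! p \<in> set (take k' (rotate p' xs))"
    using p eq nth_rotate[of 0 xs p] by fastforce
  then obtain i where i: "i < k'" "rotate p' xs ! i = xs ! p"
    using k by (auto simp: in_set_conv_nth)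
  then have "xs ! ((p' + i) mod ?n) = xs ! p"
    using k by (simp add: nth_rotate)
  then have p_eq: "p = (p' + i) mod ?n"
    using xs p nth_eq_iff_index_eq[of xs "(p' + i) mod ?n" p] mod_less_divisor[of ?n "p' + i"]
    by linarith
  show "p = p'"
  proof (cases i)
    case 0
    then show ?thesis using p_eq p by simp
  next
    case (Suc j)
    have "rotate i (rotate p' xs) = rotate (p' + i) xs"
      by (simp add: rotate_rotate add.commute)
    also have "\<dots> = rotate p xs"
      using p_eq rotate_conv_mod[of "p' + i" xs] by simp
    finally have rot: "rotate i (rotate p' xs) = rotate p xs" .
    have "rotate i (rotate p' xs) ! (?n - 1) = rotate p' xs ! ((i + (?n - 1)) mod ?n)"
      using p nth_rotate[of "?n - 1" "rotate p' xs" i] by simp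
    then have "rotate p xs ! (?n - 1) = rotate p' xs ! ((i + (?n - 1)) mod ?n)"
      unfolding rot .
    also have "i + (?n - 1) = j + ?n"
      using Suc k by simp
    also have "(j + ?n) mod ?n = j"
      using Suc i k by simp
    finally have "rotate p xs ! (?n - 1) \<in> set (take k' (rotate p' xs))"
      using Suc i k xs nth_in_set_take[of "rotate p' xs" j k'] by simp
    moreover have "?n - 1 < ?n"
      using k by simp
    ultimately have "?n - 1 < k"
      using eq xs nth_in_set_take[of "rotate p xs" "?n - 1" k] by simp
    then show ?thesis
      using k by simp
  qed
qed

section \<open>Ternary strings\<close>

lemma tern_str_list_update: "tern_str m X \<Longrightarrow> b < 3 \<Longrightarrow> tern_str m (X[i := b])"
  unfolding tern_str_def using set_update_subset_insert by fastforce

lemma differ_oneI: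
  assumes "length W = length V" "i < length V" "V ! i \<noteq> W ! i"
    and "\<And>j. j < length V \<Longrightarrow> j \<noteq> i \<Longrightarrow> V ! j = W ! j"
  shows "differ_one V W"
proof -
  have "{j. j < length V \<and> V ! j \<noteq> W ! j} = {i}"
    using assms(2-4) by blast
  then show ?thesis
    using assms(1) by (simp add: differ_one_def)
qed

lemma differ_one_imp_neq: "differ_one V W \<Longrightarrow> V \<noteq> W"
  by (auto simp: differ_one_def)

lemma differ_one_sym: "differ_one V W \<Longrightarrow> differ_one W V"
proof -
  assume V: "differ_one V W"
  then have "{i. i < length W \<and> W ! i \<noteq> V ! i} = {i. i < length V \<and> V ! i \<noteq> W ! i}"
    unfolding differ_one_def by (metis (full_types))
  with V show ?thesis
    unfolding differ_one_def by metis
qed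

lemma differ_one_list_update: "i < length V \<Longrightarrow> b \<noteq> V ! i \<Longrightarrow> differ_one V (V[i := b])"
  by (rule differ_oneI[of _ _ i]) auto

definition diff_positions :: "'a list \<Rightarrow> 'a list \<Rightarrow> nat list" where
  "diff_positions X X' = filter (\<lambda>i. X ! i \<noteq> X' ! i) [0..<length X]"

lemma set_diff_positions: "set (diff_positions X X') = {i. i < length X \<and> X ! i \<noteq> X' ! i}"
  by (auto simp: diff_positions_def)

lemma distinct_diff_positions: "distinct (diff_positions X X')"
  by (simp add: diff_positions_def)

lemma length_diff_positions_le: "length (diff_positions X X') \<le> length X"
  unfolding diff_positions_def using length_filter_le[of _ "[0..<length X]"] by simp

lemma length_diff_positions_less:
  "i < length X \<Longrightarrow> X ! i = X' ! i \<Longrightarrow> length (diff_positions X X') < length X"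
  unfolding diff_positions_def using length_filter_less[of i "[0..<length X]"] by simp

lemma length_diff_positions_eq_card:
  "length (diff_positions X X') = card {i. i < length X \<and> X ! i \<noteq> X' ! i}"
  by (metis distinct_card distinct_diff_positions set_diff_positions)

lemma diff_positions_eq_Nil_iff:
  "length X' = length X \<Longrightarrow> diff_positions X X' = [] \<longleftrightarrow> X = X'"
  by (auto simp: diff_positions_def filter_empty_conv intro: nth_equalityI)

lemma differ_one_iff_length_diff_positions:
  "length X' = length X \<Longrightarrow> differ_one X X' \<longleftrightarrow> length (diff_positions X X') = 1"
  by (simp add: differ_one_def length_diff_positions_eq_card)

definition list_override :: "'a list \<Rightarrow> 'a list \<Rightarrow> nat set \<Rightarrow> 'a list" where
  "list_override X X' I = map (\<lambda>i. if i \<in> I then X' ! i else X ! i) [0..<length X]"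

lemma length_list_override [simp]: "length (list_override X X' I) = length X"
  by (simp add: list_override_def)

lemma nth_list_override:
  "i < length X \<Longrightarrow> list_override X X' I ! i = (if i \<in> I then X' ! i else X ! i)"
  by (simp add: list_override_def)

lemma list_override_empty [simp]: "list_override X X' {} = X"
  by (simp add: list_override_def map_nth)

lemma list_override_eq_right:
  "length X' = length X \<Longrightarrow> set (diff_positions X X') \<subseteq> I \<Longrightarrow> list_override X X' I = X'"
  by (rule nth_equalityI) (auto simp: nth_list_override set_diff_positions)

lemma tern_str_list_override:
  "tern_str m X \<Longrightarrow> tern_str m X' \<Longrightarrow> tern_str m (list_override X X' I)"
  by (auto simp: tern_str_def list_override_def)

lemma differ_one_list_override_insert:
  assumes "i \<in> set (diff_positions X X')" "i \<notin> I"
  shows "differ_one (list_override X X' I) (list_override X X' (insert i I))"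
  using assms by (intro differ_oneI[of _ _ i]) (auto simp: nth_list_override set_diff_positions)

lemma list_override_inj:
  assumes "list_override X X' I = list_override X X' J"
    and "I \<subseteq> set (diff_positions X X')" "J \<subseteq> set (diff_positions X X')"
  shows "I = J"
proof -
  have "i \<in> I \<longleftrightarrow> i \<in> J" if "i \<in> set (diff_positions X X')" for i
    using that arg_cong[OF assms(1), of "\<lambda>W. W ! i"]
    by (auto simp: nth_list_override set_diff_positions split: if_splits)
  then show ?thesis using assms(2,3) by blast
qed

definition flip_walk :: "'a list \<Rightarrow> 'a list \<Rightarrow> nat list \<Rightarrow> 'a list list" where
  "flip_walk X X' ps = map (\<lambda>k. list_override X X' (set (take k ps))) [0..<Suc (length ps)]"

lemma length_flip_walk [simp]: "length (flip_walk X X' ps) = Suc (length ps)"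
  by (simp add: flip_walk_def)

lemma flip_walk_neq_Nil [simp]: "flip_walk X X' ps \<noteq> []"
  by (simp add: flip_walk_def)

lemma hd_flip_walk [simp]: "hd (flip_walk X X' ps) = X"
  by (simp add: flip_walk_def hd_map del: upt_Suc)

lemma last_flip_walk: "last (flip_walk X X' ps) = list_override X X' (set ps)"
  by (simp add: flip_walk_def last_map del: upt_Suc)

lemma tern_str_flip_walk:
  "tern_str m X \<Longrightarrow> tern_str m X' \<Longrightarrow> W \<in> set (flip_walk X X' ps) \<Longrightarrow> tern_str m W"
  by (auto simp: flip_walk_def tern_str_list_override)

lemma flip_walk_nth:
  "W \<in> set (flip_walk X X' ps) \<Longrightarrow> i < length X \<Longrightarrow> W ! i = X ! i \<or> W ! i = X' ! i"
  by (auto simp: flip_walk_def nth_list_override)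

lemma distinct_flip_walk:
  assumes ps: "distinct ps" "set ps \<subseteq> set (diff_positions X X')"
  shows "distinct (flip_walk X X' ps)"
  unfolding flip_walk_def distinct_map
proof (intro conjI inj_onI)
  fix k k' assume k: "k \<in> set [0..<Suc (length ps)]" "k' \<in> set [0..<Suc (length ps)]"
    and eq: "list_override X X' (set (take k ps)) = list_override X X' (set (take k' ps))"
  have "set (take k ps) = set (take k' ps)"
    using list_override_inj[OF eq] ps set_take_subset by (metis order_trans)
  then have "card (set (take k ps)) = card (set (take k' ps))" by simp
  then show "k = k'"
    using k ps(1) by (auto simp: distinct_card min_def split: if_splits)
qed simp

lemma successively_flip_walk:
  assumes ps: "distinct ps" "set ps \<subseteq> set (diff_positions X X')"
  shows "successively differ_one (flip_walk X X' ps)"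
  unfolding flip_walk_def successively_map
proof (rule successively_upt)
  fix k assume k: "Suc k < Suc (length ps)"
  have "set (take (Suc k) ps) = insert (ps ! k) (set (take k ps))"
    using k by (simp add: take_Suc_conv_app_nth)
  moreover have "ps ! k \<notin> set (take k ps)"
    using k ps(1) by (auto simp: in_set_conv_nth nth_eq_iff_index_eq)
  moreover have "ps ! k \<in> set (diff_positions X X')"
    using k ps(2) by auto
  ultimately show "differ_one (list_override X X' (set (take k ps)))
      (list_override X X' (set (take (Suc k) ps)))"
    by (simp add: differ_one_list_override_insert)
qed

definition hamming_walk :: "'a list \<Rightarrow> 'a list \<Rightarrow> 'a list list" where
  "hamming_walk X X' = flip_walk X X' (diff_positions X X')"

lemma hamming_walk_neq_Nil [simp]: "hamming_walk X X' \<noteq> []"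
  by (simp add: hamming_walk_def)

lemma hd_hamming_walk [simp]: "hd (hamming_walk X X') = X"
  by (simp add: hamming_walk_def)

lemma last_hamming_walk: "length X' = length X \<Longrightarrow> last (hamming_walk X X') = X'"
  by (simp add: hamming_walk_def last_flip_walk list_override_eq_right)

lemma length_hamming_walk: "length (hamming_walk X X') \<le> Suc (length X)"
  using length_diff_positions_le by (simp add: hamming_walk_def)

lemma distinct_hamming_walk: "distinct (hamming_walk X X')"
  by (simp add: hamming_walk_def distinct_flip_walk distinct_diff_positions)

lemma successively_hamming_walk: "successively differ_one (hamming_walk X X')"
  by (simp add: hamming_walk_def successively_flip_walk distinct_diff_positions)

lemma tern_str_hamming_walk:
  "tern_str m X \<Longrightarrow> tern_str m X' \<Longrightarrow> W \<in> set (hamming_walk X X') \<Longrightarrow> tern_str m W"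
  unfolding hamming_walk_def by (rule tern_str_flip_walk)

lemma hamming_walk_nth:
  "W \<in> set (hamming_walk X X') \<Longrightarrow> i < length X \<Longrightarrow> W ! i = X ! i \<or> W ! i = X' ! i"
  unfolding hamming_walk_def by (rule flip_walk_nth)

section \<open>Disjoint routes in the ternary Hamming graph\<close>

definition ternary_route :: "nat \<Rightarrow> nat list \<Rightarrow> nat list \<Rightarrow> nat list list \<Rightarrow> bool" where
  "ternary_route m X X' R \<longleftrightarrow> R \<noteq> [] \<and> length R \<le> m \<and> (\<forall>W\<in>set R. tern_str m W) \<and>
     distinct (X # R @ [X']) \<and> successively differ_one (X # R @ [X'])"

lemma ternary_routeD:
  assumes "ternary_route m X X' R"
  shows "R \<noteq> []" "length R \<le> m" "\<forall>W\<in>set R. tern_str m W" "distinct R"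
    "X \<notin> set R" "X' \<notin> set R" "X \<noteq> X'" "successively differ_one R"
    "differ_one X (hd R)" "differ_one (last R) X'"
  using assms by (auto simp: ternary_route_def successively_Cons successively_append_iff)

definition detour :: "'a list \<Rightarrow> 'a list \<Rightarrow> nat \<Rightarrow> 'a \<Rightarrow> 'a list list" where
  "detour X X' i b = hamming_walk (X[i := b]) (X'[i := b])"

lemma detour_nth:
  assumes "W \<in> set (detour X X' i b)" "length X' = length X" "j < length X"
  shows "W ! j = (if j = i then b else X ! j) \<or> W ! j = (if j = i then b else X' ! j)"
  using hamming_walk_nth[of W "X[i := b]" "X'[i := b]" j] assms
  by (cases "j = i") (simp_all add: detour_def)

lemma ternary_route_detour:
  assumes X: "tern_str m X" "tern_str m X'" "X \<noteq> X'"
    and i: "i < m" "b < 3" "b \<noteq> X ! i" "b \<noteq> X' ! i"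
  shows "ternary_route m X X' (detour X X' i b)"
proof -
  have len: "length X = m" "length X' = m"
    using X by (simp_all add: tern_str_def)
  have at_i: "W ! i = b" if "W \<in> set (detour X X' i b)" for W
    using detour_nth[OF that, of i] len i by simp
  have "length (diff_positions (X[i := b]) (X'[i := b])) < m"
    using length_diff_positions_less[of i "X[i := b]" "X'[i := b]"] len i by simp
  then have "length (detour X X' i b) \<le> m"
    by (simp add: detour_def hamming_walk_def)
  moreover have "\<forall>W\<in>set (detour X X' i b). tern_str m W"
    using X i by (auto simp: detour_def intro: tern_str_hamming_walk tern_str_list_update)
  moreover have "distinct (X # detour X X' i b @ [X'])"
    using at_i X(3) i by (auto simp: detour_def distinct_hamming_walk)
  moreover have "successively differ_one (X # detour X X' i b @ [X'])"
    using len i differ_one_list_update[of i X b] differ_one_list_update[of i X' b]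
    by (auto simp: detour_def successively_Cons successively_append_iff successively_hamming_walk
        last_hamming_walk differ_one_sym)
  ultimately show ?thesis
    by (simp add: ternary_route_def detour_def)
qed

lemma detours_disjoint:
  assumes "length X' = length X" "i < length X" "i' < length X"
    and "b \<noteq> X ! i" "b \<noteq> X' ! i" "b' \<noteq> X ! i'" "b' \<noteq> X' ! i'" "(i, b) \<noteq> (i', b')"
  shows "set (detour X X' i b) \<inter> set (detour X X' i' b') = {}"
proof (rule equals0I)
  fix W assume "W \<in> set (detour X X' i b) \<inter> set (detour X X' i' b')"
  then show False
    using detour_nth[of W X X' i b i] detour_nth[of W X X' i' b' i] assms
    by (auto split: if_splits)
qed

definition direct_route :: "'a list \<Rightarrow> 'a list \<Rightarrow> nat \<Rightarrow> 'a list list" where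
  "direct_route X X' p =
     map (\<lambda>k. list_override X X' (set (take k (rotate p (diff_positions X X')))))
     [1..<length (diff_positions X X')]"

lemma flip_walk_rotate_eq_direct_route:
  assumes "length X' = length X" "X \<noteq> X'"
  shows "flip_walk X X' (rotate p (diff_positions X X')) = X # direct_route X X' p @ [X']"
proof -
  let ?h = "length (diff_positions X X')"
  have "?h \<noteq> 0"
    using assms diff_positions_eq_Nil_iff by fastforce
  then have "[0..<Suc ?h] = 0 # [1..<?h] @ [?h]"
    by (simp add: upt_conv_Cons)
  then show ?thesis
    using assms by (simp add: flip_walk_def direct_route_def list_override_eq_right)
qed

lemma direct_route_nth:
  "W \<in> set (direct_route X X' p) \<Longrightarrow> j < length X \<Longrightarrow> W ! j = X ! j \<or> W ! j = X' ! j"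
  by (auto simp: direct_route_def nth_list_override)

lemma direct_route_walk:
  assumes "length X' = length X" "X \<noteq> X'"
  shows "distinct (X # direct_route X X' p @ [X'])"
    and "successively differ_one (X # direct_route X X' p @ [X'])"
  using distinct_flip_walk[of "rotate p (diff_positions X X')" X X']
    successively_flip_walk[of "rotate p (diff_positions X X')" X X']
    flip_walk_rotate_eq_direct_route[OF assms, of p]
  by (simp_all add: distinct_diff_positions)

lemma ternary_route_direct_route:
  assumes X: "tern_str m X" "tern_str m X'" "X \<noteq> X'" "\<not> differ_one X X'"
  shows "ternary_route m X X' (direct_route X X' p)"
proof -
  let ?D = "diff_positions X X'"
  have len: "length X = m" "length X' = m"
    using X by (simp_all add: tern_str_def)
  have "length ?D \<noteq> 0" "length ?D \<noteq> 1"
    using X len diff_positions_eq_Nil_iff[of X' X] differ_one_iff_length_diff_positions[of X' X]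
    by auto
  then have "direct_route X X' p \<noteq> []"
    by (simp add: direct_route_def le_Suc_eq)
  moreover have "length (direct_route X X' p) \<le> m"
    using length_diff_positions_le[of X X'] len by (simp add: direct_route_def)
  moreover have "\<forall>W\<in>set (direct_route X X' p). tern_str m W"
    using X by (auto simp: direct_route_def tern_str_list_override)
  moreover have "distinct (X # direct_route X X' p @ [X'])"
    "successively differ_one (X # direct_route X X' p @ [X'])"
    using direct_route_walk[of X' X p] len X(3) by simp_all
  ultimately show ?thesis
    by (simp add: ternary_route_def)
qed

lemma direct_routes_disjoint:
  assumes "p < length (diff_positions X X')" "p' < length (diff_positions X X')" "p \<noteq> p'"
  shows "set (direct_route X X' p) \<inter> set (direct_route X X' p') = {}"
proof (rule equals0I)
  let ?D = "diff_positions X X'"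
  fix W assume W: "W \<in> set (direct_route X X' p) \<inter> set (direct_route X X' p')"
  have "W \<in> set (direct_route X X' p)" "W \<in> set (direct_route X X' p')"
    using W by simp_all
  then obtain k k'
    where k: "k \<in> {1..<length ?D}" "W = list_override X X' (set (take k (rotate p ?D)))"
      and k': "k' \<in> {1..<length ?D}" "W = list_override X X' (set (take k' (rotate p' ?D)))"
    unfolding direct_route_def set_map set_upt by blast
  have eq: "list_override X X' (set (take k (rotate p ?D))) =
      list_override X X' (set (take k' (rotate p' ?D)))"
    using k k' by simp
  have "set (take k (rotate p ?D)) = set (take k' (rotate p' ?D))"
    using list_override_inj[OF eq] set_take_subset[of _ "rotate _ ?D"] by simp
  then show False
    using set_take_rotate_inj[OF distinct_diff_positions assms(1,2), of k k'] k(1) k'(1) assms(3)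
    by simp
qed

definition detour_keys :: "nat list \<Rightarrow> nat list \<Rightarrow> (nat \<times> nat) list" where
  "detour_keys X X' =
     concat (map (\<lambda>i. map (Pair i) (filter (\<lambda>b. b \<noteq> X ! i \<and> b \<noteq> X' ! i) [0..<3])) [0..<length X])"

lemma mem_detour_keys:
  "(i, b) \<in> set (detour_keys X X') \<longleftrightarrow> i < length X \<and> b < 3 \<and> b \<noteq> X ! i \<and> b \<noteq> X' ! i"
  by (auto simp: detour_keys_def)

lemma distinct_detour_keys: "distinct (detour_keys X X')"
  unfolding detour_keys_def by (rule distinct_concat_map) (auto simp: distinct_map inj_on_def)

lemma length_filter_avoiding_two:
  "x < 3 \<Longrightarrow> x' < 3 \<Longrightarrow>
    length (filter (\<lambda>b. b \<noteq> x \<and> b \<noteq> x') [0..<3]) + (if x \<noteq> x' then 1 else 0) = (2::nat)"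
  by (auto simp: less_Suc_eq numeral_3_eq_3)

lemma length_detour_keys:
  assumes "tern_str m X" "tern_str m X'"
  shows "length (detour_keys X X') + length (diff_positions X X') = 2 * m"
proof -
  have "length (concat (map (\<lambda>i. map (Pair i) (filter (\<lambda>b. b \<noteq> X ! i \<and> b \<noteq> X' ! i) [0..<3]))
      [0..<n])) + length (filter (\<lambda>i. X ! i \<noteq> X' ! i) [0..<n]) = 2 * n" if "n \<le> m" for n
    using that
  proof (induction n)
    case (Suc n)
    have "X ! n < 3" "X' ! n < 3"
      using assms Suc.prems by (auto simp: tern_str_def)
    then show ?case
      using Suc length_filter_avoiding_two[of "X ! n" "X' ! n"] by auto
  qed simp
  then show ?thesis
    using assms by (simp add: detour_keys_def diff_positions_def tern_str_def)
qed

definition ternary_routes :: "nat list \<Rightarrow> nat list \<Rightarrow> nat list list list" where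
  "ternary_routes X X' = map (\<lambda>(i, b). detour X X' i b) (detour_keys X X') @
     (if differ_one X X' then [] else map (direct_route X X') [0..<length (diff_positions X X')])"

context
  fixes m :: nat and X X' :: "nat list"
  assumes X: "tern_str m X" "tern_str m X'" "X \<noteq> X'"
begin

lemma ternary_route_ternary_routes: "R \<in> set (ternary_routes X X') \<Longrightarrow> ternary_route m X X' R"
  using X by (auto simp: ternary_routes_def mem_detour_keys tern_str_def split: if_splits
      intro: ternary_route_detour ternary_route_direct_route)

lemma length_ternary_routes:
  "length (ternary_routes X X') + (if differ_one X X' then 1 else 0) = 2 * m"
  using length_detour_keys[OF X(1,2)] differ_one_iff_length_diff_positions[of X' X] X(1,2)
  by (simp add: ternary_routes_def tern_str_def)

lemma distinct_concat_ternary_routes: "distinct (concat (ternary_routes X X'))"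
proof -
  let ?D = "diff_positions X X'"
  have len: "length X = m" "length X' = m"
    using X by (simp_all add: tern_str_def)
  have "distinct (concat (map (\<lambda>(i, b). detour X X' i b) (detour_keys X X')))"
  proof (rule distinct_concat_map[OF distinct_detour_keys])
    fix ib assume ib: "ib \<in> set (detour_keys X X')"
    obtain i b where [simp]: "ib = (i, b)" by (cases ib)
    show "distinct (case ib of (i, b) \<Rightarrow> detour X X' i b)"
      using ib ternary_route_detour[OF X] len by (auto simp: mem_detour_keys ternary_route_def)
  next
    fix ib ib' assume ib: "ib \<in> set (detour_keys X X')" "ib' \<in> set (detour_keys X X')" "ib \<noteq> ib'"
    obtain i b i' b' where [simp]: "ib = (i, b)" "ib' = (i', b')" by (cases ib, cases ib')
    show "set (case ib of (i, b) \<Rightarrow> detour X X' i b) \<inter>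
        set (case ib' of (i, b) \<Rightarrow> detour X X' i b) = {}"
      using ib len detours_disjoint[of X' X i i' b b'] by (auto simp: mem_detour_keys)
  qed
  moreover have "distinct (concat (map (direct_route X X') [0..<length ?D]))"
    using direct_route_walk[of X' X] len X(3)
    by (intro distinct_concat_map) (simp_all add: direct_routes_disjoint)
  moreover have "set (detour X X' i b) \<inter> set (direct_route X X' p) = {}"
    if "(i, b) \<in> set (detour_keys X X')" for i b p
  proof (rule equals0I)
    fix W assume "W \<in> set (detour X X' i b) \<inter> set (direct_route X X' p)"
    then show False
      using that len detour_nth[of W X X' i b i] direct_route_nth[of W X X' p i]
      by (auto simp: mem_detour_keys)
  qed
  ultimately show ?thesis
    by (auto simp: ternary_routes_def)
qed

end

lemma e3c_adj_level_change:
  "(A, B, C, d) \<in> e3c_verts r s t \<Longrightarrow> d' < 3 \<Longrightarrow> d \<noteq> d' \<Longrightarrow> e3c_adj r s t (A, B, C, d) (A, B, C, d')"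
  by (simp add: e3c_adj_def e3c_verts_def)

lemma e3c_adj_level0:
  "tern_str r A \<Longrightarrow> tern_str s B \<Longrightarrow> tern_str t C \<Longrightarrow> tern_str t C' \<Longrightarrow> differ_one C C' \<Longrightarrow>
    e3c_adj r s t (A, B, C, 0) (A, B, C', 0)"
  by (simp add: e3c_adj_def e3c_verts_def differ_one_imp_neq)

lemma e3c_adj_level1:
  "tern_str r A \<Longrightarrow> tern_str s B \<Longrightarrow> tern_str s B' \<Longrightarrow> tern_str t C \<Longrightarrow> differ_one B B' \<Longrightarrow>
    e3c_adj r s t (A, B, C, 1) (A, B', C, 1)"
  by (simp add: e3c_adj_def e3c_verts_def differ_one_imp_neq)

lemma e3c_adj_level2:
  "tern_str r A \<Longrightarrow> tern_str r A' \<Longrightarrow> tern_str s B \<Longrightarrow> tern_str t C \<Longrightarrow> differ_one A A' \<Longrightarrow>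
    e3c_adj r s t (A, B, C, 2) (A', B, C, 2)"
  by (simp add: e3c_adj_def e3c_verts_def differ_one_imp_neq)

lemma successively_e3c_adj_level0:
  "\<forall>S\<in>set Ws. tern_str t S \<Longrightarrow> successively differ_one Ws \<Longrightarrow> tern_str r A \<Longrightarrow> tern_str s B \<Longrightarrow>
    successively (e3c_adj r s t) (map (\<lambda>S. (A, B, S, 0)) Ws)"
  unfolding successively_map by (erule successively_mono) (rule e3c_adj_level0; auto)

lemma successively_e3c_adj_level1:
  "\<forall>S\<in>set Ws. tern_str s S \<Longrightarrow> successively differ_one Ws \<Longrightarrow> tern_str r A \<Longrightarrow> tern_str t C \<Longrightarrow>
    successively (e3c_adj r s t) (map (\<lambda>S. (A, S, C, 1)) Ws)"
  unfolding successively_map by (erule successively_mono) (rule e3c_adj_level1; auto)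

lemma successively_e3c_adj_level2:
  "\<forall>S\<in>set Ws. tern_str r S \<Longrightarrow> successively differ_one Ws \<Longrightarrow> tern_str s B \<Longrightarrow> tern_str t C \<Longrightarrow>
    successively (e3c_adj r s t) (map (\<lambda>S. (S, B, C, 2)) Ws)"
  unfolding successively_map by (erule successively_mono) (rule e3c_adj_level2; auto)

lemma e3c_pathI:
  assumes "distinct (u # M @ [v])" "successively (e3c_adj r s t) (u # M @ [v])"
  shows "e3c_path r s t u v (u # M @ [v])"
proof -
  let ?p = "u # M @ [v]"
  have "?p ! i \<in> e3c_verts r s t" if i: "i < length ?p" for i
  proof (cases "Suc i < length ?p")
    case True
    then show ?thesis
      using successively_nth[OF assms(2) True] by (simp add: e3c_adj_def)
  next
    case False
    then have "Suc (i - 1) < length ?p" "Suc (i - 1) = i"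
      using i by auto
    then show ?thesis
      using successively_nth[OF assms(2), of "i - 1"] by (simp add: e3c_adj_def)
  qed
  then have "set ?p \<subseteq> e3c_verts r s t"
    by (metis in_set_conv_nth subsetI)
  then show ?thesis
    using assms by (simp add: e3c_path_def successively_conv_nth)
qed

lemma e3c_pathD:
  "e3c_path r s t u v p \<Longrightarrow> distinct p \<and> set p \<subseteq> e3c_verts r s t \<and> successively (e3c_adj r s t) p"
  by (simp add: e3c_path_def successively_conv_nth)

definition path_interiors ::
    "nat \<Rightarrow> nat \<Rightarrow> nat \<Rightarrow> e3c_vertex \<Rightarrow> e3c_vertex \<Rightarrow> nat \<Rightarrow> e3c_vertex list list \<Rightarrow> bool" where
  "path_interiors r s t u v L Ms \<longleftrightarrow> [] \<notin> set Ms \<and> distinct (concat Ms) \<and>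
     (\<forall>M\<in>set Ms. e3c_path r s t u v (u # M @ [v]) \<and> path_len (u # M @ [v]) \<le> L)"

lemma path_interiors_take:
  "path_interiors r s t u v L Ms \<Longrightarrow> path_interiors r s t u v L (take n Ms)"
  unfolding path_interiors_def
  by (metis append_take_drop_id concat_append distinct_append in_set_takeD)

lemma path_interiors_map:
  assumes Ms: "path_interiors a b c u v L Ms"
    and inj: "inj_on f (e3c_verts a b c)"
    and adj: "\<And>x y. e3c_adj a b c x y \<Longrightarrow> e3c_adj r s t (f x) (f y)"
  shows "path_interiors r s t (f u) (f v) L (map (map f) Ms)"
proof -
  have path: "e3c_path r s t (f u) (f v) (f u # map f M @ [f v])"
    if "e3c_path a b c u v (u # M @ [v])" for M
  proof (rule e3c_pathI)
    note p = e3c_pathD[OF that]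
    show "distinct (f u # map f M @ [f v])"
      using p distinct_map[of f "u # M @ [v]"] inj_on_subset[OF inj] by auto
    show "successively (e3c_adj r s t) (f u # map f M @ [f v])"
      using successively_map[of "e3c_adj r s t" f "u # M @ [v]"] p adj
      by (auto elim: successively_mono)
  qed
  have "set (concat Ms) \<subseteq> e3c_verts a b c"
    using Ms by (fastforce simp: path_interiors_def dest!: e3c_pathD)
  then have "distinct (concat (map (map f) Ms))"
    using Ms inj_on_subset[OF inj] by (simp add: path_interiors_def distinct_map flip: map_concat)
  then show ?thesis
    using Ms path by (auto simp: path_interiors_def path_len_def)
qed

lemma disjoint_paths_of_interiors:
  assumes "path_interiors r s t u v L Ms"
  shows "\<exists>Ps. length Ps = length Ms \<and> distinct Ps \<and>
           (\<forall>p \<in> set Ps. e3c_path r s t u v p \<and> path_len p \<le> L) \<and>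
           (\<forall>i < length Ps. \<forall>j < length Ps. i \<noteq> j \<longrightarrow> internally_disjoint (Ps ! i) (Ps ! j))"
proof (intro exI conjI)
  let ?Ps = "map (\<lambda>M. u # M @ [v]) Ms"
  have Ms: "[] \<notin> set Ms" "distinct (concat Ms)"
    using assms by (simp_all add: path_interiors_def)
  then have "distinct Ms"
    using distinct_concat_imp_distinct by blast
  then show "distinct ?Ps"
    by (simp add: distinct_map inj_on_def)
  show "\<forall>p \<in> set ?Ps. e3c_path r s t u v p \<and> path_len p \<le> L"
    using assms by (auto simp: path_interiors_def)
  show "\<forall>i < length ?Ps. \<forall>j < length ?Ps. i \<noteq> j \<longrightarrow> internally_disjoint (?Ps ! i) (?Ps ! j)"
    using \<open>distinct Ms\<close> distinct_concat_imp_disjoint[OF Ms(2)]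
    by (simp add: internally_disjoint_def interior_def nth_eq_iff_index_eq)
qed simp

section \<open>Disjoint paths between two vertices of level 2\<close>

definition route_interior ::
    "nat list \<Rightarrow> nat list \<Rightarrow> nat list \<Rightarrow> nat list \<Rightarrow> nat list list \<Rightarrow> e3c_vertex list" where
  "route_interior B C B' C' R =
     map (\<lambda>W. (W, B, C, 2)) R @ map (\<lambda>S. (last R, B, S, 0)) (hamming_walk C C') @
     map (\<lambda>S. (last R, S, C', 1)) (hamming_walk B B') @ [(last R, B', C', 2)]"

definition interior_BAC ::
    "nat list \<Rightarrow> nat list \<Rightarrow> nat list \<Rightarrow> nat list \<Rightarrow> nat list \<Rightarrow> nat list \<Rightarrow> e3c_vertex list" where
  "interior_BAC A B C A' B' C' =
     map (\<lambda>S. (A, S, C, 1)) (hamming_walk B B') @ map (\<lambda>S. (S, B', C, 2)) (hamming_walk A A') @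
     map (\<lambda>S. (A', B', S, 0)) (hamming_walk C C')"

definition interior_CAB ::
    "nat list \<Rightarrow> nat list \<Rightarrow> nat list \<Rightarrow> nat list \<Rightarrow> nat list \<Rightarrow> nat list \<Rightarrow> e3c_vertex list" where
  "interior_CAB A B C A' B' C' =
     map (\<lambda>S. (A, B, S, 0)) (hamming_walk C C') @ map (\<lambda>S. (S, B, C', 2)) (hamming_walk A A') @
     map (\<lambda>S. (A', S, C', 1)) (hamming_walk B B')"

definition interior_ACB ::
    "nat list \<Rightarrow> nat list \<Rightarrow> nat list \<Rightarrow> nat list \<Rightarrow> nat list \<Rightarrow> e3c_vertex list" where
  "interior_ACB B C A' B' C' =
     (A', B, C, 2) # map (\<lambda>S. (A', B, S, 0)) (hamming_walk C C') @
     map (\<lambda>S. (A', S, C', 1)) (hamming_walk B B')"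

definition interior_CBA ::
    "nat list \<Rightarrow> nat list \<Rightarrow> nat list \<Rightarrow> nat list \<Rightarrow> nat list \<Rightarrow> e3c_vertex list" where
  "interior_CBA A B C B' C' =
     map (\<lambda>S. (A, B, S, 0)) (hamming_walk C C') @ map (\<lambda>S. (A, S, C', 1)) (hamming_walk B B') @
     [(A, B', C', 2)]"

text \<open>For adjacent \<open>A\<close> and \<open>A'\<close>, \<open>interior_ACB\<close> completes the empty route through \<open>A'\<close> itself.
  It meets \<open>interior_CAB\<close> at level 1, so \<open>interior_CBA\<close> replaces the latter.\<close>

definition bypass_interiors ::
    "nat list \<Rightarrow> nat list \<Rightarrow> nat list \<Rightarrow> nat list \<Rightarrow> nat list \<Rightarrow> nat list \<Rightarrow> e3c_vertex list list" where
  "bypass_interiors A B C A' B' C' = interior_BAC A B C A' B' C' #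
     (if differ_one A A' then [interior_ACB B C A' B' C', interior_CBA A B C B' C']
      else [interior_CAB A B C A' B' C'])"

definition level2_interiors ::
    "nat list \<Rightarrow> nat list \<Rightarrow> nat list \<Rightarrow> nat list \<Rightarrow> nat list \<Rightarrow> nat list \<Rightarrow> e3c_vertex list list" where
  "level2_interiors A B C A' B' C' =
     map (route_interior B C B' C') (ternary_routes A A') @ bypass_interiors A B C A' B' C'"

context
  fixes r s t :: nat and A B C A' B' C' :: "nat list"
  assumes tern: "tern_str r A" "tern_str s B" "tern_str t C"
      "tern_str r A'" "tern_str s B'" "tern_str t C'"
    and neq: "A \<noteq> A'" "B \<noteq> B'" "C \<noteq> C'"
begin

lemma hamming_walks_tern_last:
  "\<forall>S\<in>set (hamming_walk A A'). tern_str r S" "last (hamming_walk A A') = A'"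
  "\<forall>S\<in>set (hamming_walk B B'). tern_str s S" "last (hamming_walk B B') = B'"
  "\<forall>S\<in>set (hamming_walk C C'). tern_str t S" "last (hamming_walk C C') = C'"
  using tern tern_str_hamming_walk[of r A A'] tern_str_hamming_walk[of s B B']
    tern_str_hamming_walk[of t C C']
  by (auto simp: last_hamming_walk tern_str_def)

lemma successively_lifted_walks:
  "successively (e3c_adj r s t) (map (\<lambda>S. (S, B', C, 2)) (hamming_walk A A'))"
  "successively (e3c_adj r s t) (map (\<lambda>S. (S, B, C', 2)) (hamming_walk A A'))"
  "successively (e3c_adj r s t) (map (\<lambda>S. (A, S, C, 1)) (hamming_walk B B'))"
  "successively (e3c_adj r s t) (map (\<lambda>S. (A, S, C', 1)) (hamming_walk B B'))"
  "successively (e3c_adj r s t) (map (\<lambda>S. (A', S, C', 1)) (hamming_walk B B'))"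
  "successively (e3c_adj r s t) (map (\<lambda>S. (A, B, S, 0)) (hamming_walk C C'))"
  "successively (e3c_adj r s t) (map (\<lambda>S. (A', B, S, 0)) (hamming_walk C C'))"
  "successively (e3c_adj r s t) (map (\<lambda>S. (A', B', S, 0)) (hamming_walk C C'))"
  using tern hamming_walks_tern_last
  by (intro successively_e3c_adj_level0 successively_e3c_adj_level1 successively_e3c_adj_level2;
      simp add: successively_hamming_walk)+

lemma route_interior_path:
  assumes R: "ternary_route r A A' R"
  shows "e3c_path r s t (A, B, C, 2) (A', B', C', 2)
      ((A, B, C, 2) # route_interior B C B' C' R @ [(A', B', C', 2)])" (is ?path)
    and "length (route_interior B C B' C' R) \<le> r + s + t + 3" (is ?len)
proof -
  note R' = ternary_routeD[OF R]
  let ?P = "last R"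
  have P: "?P \<in> set R" "tern_str r ?P"
    using R' by auto
  show ?len
    using R' length_hamming_walk[of B B'] length_hamming_walk[of C C'] tern
    by (simp add: route_interior_def tern_str_def)
  have "successively (e3c_adj r s t) (map (\<lambda>W. (W, B, C, 2)) R)"
    using R' tern by (intro successively_e3c_adj_level2) simp_all
  moreover have "successively (e3c_adj r s t) (map (\<lambda>S. (?P, B, S, 0)) (hamming_walk C C'))"
    using P tern hamming_walks_tern_last
    by (intro successively_e3c_adj_level0) (simp_all add: successively_hamming_walk)
  moreover have "successively (e3c_adj r s t) (map (\<lambda>S. (?P, S, C', 1)) (hamming_walk B B'))"
    using P tern hamming_walks_tern_last
    by (intro successively_e3c_adj_level1) (simp_all add: successively_hamming_walk)
  ultimately have "successively (e3c_adj r s t)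
      ((A, B, C, 2) # route_interior B C B' C' R @ [(A', B', C', 2)])"
    using R' P tern hamming_walks_tern_last
    by (auto simp: route_interior_def successively_Cons successively_append_iff hd_map last_map
        e3c_verts_def intro!: e3c_adj_level2 e3c_adj_level_change)
  moreover have "distinct ((A, B, C, 2) # route_interior B C B' C' R @ [(A', B', C', 2)])"
    using R' P neq by (auto simp: route_interior_def distinct_map inj_on_def distinct_hamming_walk)
  ultimately show ?path
    by (intro e3c_pathI)
qed

lemma bypass_interior_path:
  assumes "M \<in> set (bypass_interiors A B C A' B' C')"
  shows "e3c_path r s t (A, B, C, 2) (A', B', C', 2) ((A, B, C, 2) # M @ [(A', B', C', 2)])"
    and "length M \<le> r + s + t + 3"
proof -
  have M: "M = interior_BAC A B C A' B' C' \<or> M = interior_CAB A B C A' B' C' \<or>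
      differ_one A A' \<and> (M = interior_ACB B C A' B' C' \<or> M = interior_CBA A B C B' C')"
    using assms by (auto simp: bypass_interiors_def split: if_splits)
  show "length M \<le> r + s + t + 3"
    using M tern length_hamming_walk[of A A'] length_hamming_walk[of B B']
      length_hamming_walk[of C C']
    by (auto simp: interior_BAC_def interior_CAB_def interior_ACB_def interior_CBA_def tern_str_def)
  have "successively (e3c_adj r s t) ((A, B, C, 2) # M @ [(A', B', C', 2)])"
    using M tern hamming_walks_tern_last successively_lifted_walks
    by (elim disjE conjE)
      (auto simp: interior_BAC_def interior_CAB_def interior_ACB_def interior_CBA_def
        successively_Cons successively_append_iff hd_map last_map e3c_verts_def
        intro!: e3c_adj_level_change e3c_adj_level2)
  moreover have "distinct ((A, B, C, 2) # M @ [(A', B', C', 2)])"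
    using M neq
    by (elim disjE conjE)
      (auto simp: interior_BAC_def interior_CAB_def interior_ACB_def interior_CBA_def
        distinct_map inj_on_def distinct_hamming_walk)
  ultimately show
    "e3c_path r s t (A, B, C, 2) (A', B', C', 2) ((A, B, C, 2) # M @ [(A', B', C', 2)])"
    by (intro e3c_pathI)
qed

lemma route_interiors_disjoint:
  assumes "ternary_route r A A' R" "ternary_route r A A' R'" "set R \<inter> set R' = {}"
  shows "set (route_interior B C B' C' R) \<inter> set (route_interior B C B' C' R') = {}"
proof -
  have "last R \<noteq> last R'"
    using assms(3) last_in_set ternary_routeD(1)[OF assms(1)] ternary_routeD(1)[OF assms(2)]
    by (metis disjoint_iff)
  then show ?thesis
    using assms(3) neq by (auto simp: route_interior_def)
qed

lemma route_interior_disjoint_bypass: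
  assumes "ternary_route r A A' R" "M \<in> set (bypass_interiors A B C A' B' C')"
  shows "set (route_interior B C B' C' R) \<inter> set M = {}"
proof -
  note R = ternary_routeD[OF assms(1)]
  have "last R \<in> set R"
    using R by simp
  then show ?thesis
    using assms(2) R neq
    by (auto simp: route_interior_def bypass_interiors_def interior_BAC_def interior_CAB_def
        interior_ACB_def interior_CBA_def split: if_splits)
qed

lemma distinct_concat_bypass_interiors: "distinct (concat (bypass_interiors A B C A' B' C'))"
  using neq by (auto simp: bypass_interiors_def interior_BAC_def interior_CAB_def
      interior_ACB_def interior_CBA_def distinct_map inj_on_def distinct_hamming_walk)

lemma length_level2_interiors: "length (level2_interiors A B C A' B' C') = 2 * r + 2"
  using length_ternary_routes[OF tern(1,4) neq(1)]
  by (simp add: level2_interiors_def bypass_interiors_def split: if_splits)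

lemma path_interiors_level2_interiors:
  "path_interiors r s t (A, B, C, 2) (A', B', C', 2) (r + s + t + 4)
    (level2_interiors A B C A' B' C')"
proof -
  let ?u = "(A, B, C, 2::nat)" and ?v = "(A', B', C', 2::nat)"
  let ?Rs = "ternary_routes A A'"
  have routes: "ternary_route r A A' R" if "R \<in> set ?Rs" for R
    using ternary_route_ternary_routes[OF tern(1,4) neq(1) that] .
  have distinct_Rs: "distinct (concat ?Rs)"
    using distinct_concat_ternary_routes[OF tern(1,4) neq(1)] .
  have paths: "e3c_path r s t ?u ?v (?u # M @ [?v]) \<and> length M \<le> r + s + t + 3"
    if "M \<in> set (level2_interiors A B C A' B' C')" for M
    using that routes route_interior_path bypass_interior_path
    by (auto simp: level2_interiors_def)
  have "distinct (concat (map (route_interior B C B' C') ?Rs))"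
  proof (rule distinct_concat_map)
    show "distinct ?Rs"
      using distinct_concat_imp_distinct[OF distinct_Rs] routes ternary_routeD(1) by blast
    show "distinct (route_interior B C B' C' R)" if "R \<in> set ?Rs" for R
      using route_interior_path(1)[OF routes[OF that]] by (simp add: e3c_path_def)
    show "set (route_interior B C B' C' R) \<inter> set (route_interior B C B' C' R') = {}"
      if "R \<in> set ?Rs" "R' \<in> set ?Rs" "R \<noteq> R'" for R R'
      using that routes distinct_concat_imp_disjoint[OF distinct_Rs] route_interiors_disjoint
      by blast
  qed
  then have "distinct (concat (level2_interiors A B C A' B' C'))"
    using distinct_concat_bypass_interiors routes route_interior_disjoint_bypass
    by (fastforce simp: level2_interiors_def)
  moreover have "[] \<notin> set (level2_interiors A B C A' B' C')"
    by (auto simp: level2_interiors_def bypass_interiors_def route_interior_def interior_BAC_def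
        interior_CAB_def interior_ACB_def interior_CBA_def)
  ultimately show ?thesis
    using paths by (fastforce simp: path_interiors_def path_len_def)
qed

end

section \<open>Exchanging coordinates\<close>

definition swap_AC :: "e3c_vertex \<Rightarrow> e3c_vertex" where
  "swap_AC = (\<lambda>(A, B, C, d). (C, B, A, 2 - d))"

definition swap_AB :: "e3c_vertex \<Rightarrow> e3c_vertex" where
  "swap_AB = (\<lambda>(A, B, C, d). (B, A, C, if d = 0 then 0 else 3 - d))"

lemma inj_on_swap_AC: "inj_on swap_AC (e3c_verts t s r)"
  by (auto simp: inj_on_def swap_AC_def e3c_verts_def)

lemma inj_on_swap_AB: "inj_on swap_AB (e3c_verts s r t)"
  by (auto simp: inj_on_def swap_AB_def e3c_verts_def split: if_splits)

lemma e3c_adj_swap_AC: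
  assumes "e3c_adj t s r x y"
  shows "e3c_adj r s t (swap_AC x) (swap_AC y)"
proof -
  obtain A B C d A' B' C' d' where xy: "x = (A, B, C, d)" "y = (A', B', C', d')"
    by (cases x, cases y)
  have "d < 3" "d' < 3"
    using assms by (simp_all add: e3c_adj_def e3c_verts_def xy)
  then have "(d = 0 \<or> d = 1 \<or> d = 2) \<and> (d' = 0 \<or> d' = 1 \<or> d' = 2)"
    by linarith
  then show ?thesis
    using assms unfolding xy
    by (elim conjE disjE)
      (auto simp: e3c_adj_def e3c_verts_def swap_AC_def dest: differ_one_imp_neq)
qed

lemma e3c_adj_swap_AB:
  assumes "e3c_adj s r t x y"
  shows "e3c_adj r s t (swap_AB x) (swap_AB y)"
proof -
  obtain A B C d A' B' C' d' where xy: "x = (A, B, C, d)" "y = (A', B', C', d')"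
    by (cases x, cases y)
  have "d < 3" "d' < 3"
    using assms by (simp_all add: e3c_adj_def e3c_verts_def xy)
  then have "(d = 0 \<or> d = 1 \<or> d = 2) \<and> (d' = 0 \<or> d' = 1 \<or> d' = 2)"
    by linarith
  then show ?thesis
    using assms unfolding xy
    by (elim conjE disjE)
      (auto simp: e3c_adj_def e3c_verts_def swap_AB_def dest: differ_one_imp_neq)
qed

context
  fixes r s t :: nat and A B C A' B' C' :: "nat list"
  assumes tern: "tern_str r A" "tern_str s B" "tern_str t C"
      "tern_str r A'" "tern_str s B'" "tern_str t C'"
    and neq: "A \<noteq> A'" "B \<noteq> B'" "C \<noteq> C'"
begin

lemma path_interiors_level2:
  "\<exists>Ms. length Ms = 2 * r + 2 \<and>
    path_interiors r s t (A, B, C, 2) (A', B', C', 2) (r + s + t + 4) Ms"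
  using length_level2_interiors[OF tern neq] path_interiors_level2_interiors[OF tern neq] by blast

lemma path_interiors_level0:
  "\<exists>Ms. length Ms = 2 * t + 2 \<and>
    path_interiors r s t (A, B, C, 0) (A', B', C', 0) (r + s + t + 4) Ms"
proof -
  note swapped = tern(3,2,1,6,5,4) neq(3,2,1)
  have "path_interiors r s t (swap_AC (C, B, A, 2)) (swap_AC (C', B', A', 2)) (t + s + r + 4)
      (map (map swap_AC) (level2_interiors C B A C' B' A'))"
    using path_interiors_level2_interiors[OF swapped] inj_on_swap_AC e3c_adj_swap_AC
    by (rule path_interiors_map)
  then show ?thesis
    using length_level2_interiors[OF swapped]
    by (intro exI[of _ "map (map swap_AC) (level2_interiors C B A C' B' A')"])
      (simp add: swap_AC_def add_ac)
qed

lemma path_interiors_level1: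
  "\<exists>Ms. length Ms = 2 * s + 2 \<and>
    path_interiors r s t (A, B, C, 1) (A', B', C', 1) (r + s + t + 4) Ms"
proof -
  note swapped = tern(2,1,3,5,4,6) neq(2,1,3)
  have "path_interiors r s t (swap_AB (B, A, C, 2)) (swap_AB (B', A', C', 2)) (s + r + t + 4)
      (map (map swap_AB) (level2_interiors B A C B' A' C'))"
    using path_interiors_level2_interiors[OF swapped] inj_on_swap_AB e3c_adj_swap_AB
    by (rule path_interiors_map)
  then show ?thesis
    using length_level2_interiors[OF swapped]
    by (intro exI[of _ "map (map swap_AB) (level2_interiors B A C B' A' C')"])
      (simp add: swap_AB_def add_ac)
qed

lemma path_interiors_exist:
  assumes "d < 3" "r \<le> s" "s \<le> t"
  shows "\<exists>Ms. 2 * r + 2 \<le> length Ms \<and>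
    path_interiors r s t (A, B, C, d) (A', B', C', d) (r + s + t + 4) Ms"
proof -
  have "d = 0 \<or> d = 1 \<or> d = 2"
    using assms(1) by linarith
  then show ?thesis
  proof (elim disjE)
    assume "d = 0"
    moreover obtain Ms where "length Ms = 2 * t + 2"
      "path_interiors r s t (A, B, C, 0) (A', B', C', 0) (r + s + t + 4) Ms"
      using path_interiors_level0 by blast
    ultimately show ?thesis
      using assms(2,3) by (auto intro!: exI[of _ Ms])
  next
    assume "d = 1"
    moreover obtain Ms where "length Ms = 2 * s + 2"
      "path_interiors r s t (A, B, C, 1) (A', B', C', 1) (r + s + t + 4) Ms"
      using path_interiors_level1 by blast
    ultimately show ?thesis
      using assms(2) by (auto intro!: exI[of _ Ms])
  next
    assume "d = 2"
    moreover obtain Ms where "length Ms = 2 * r + 2"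
      "path_interiors r s t (A, B, C, 2) (A', B', C', 2) (r + s + t + 4) Ms"
      using path_interiors_level2 by blast
    ultimately show ?thesis
      by (auto intro!: exI[of _ Ms])
  qed
qed

end

theorem lemma13:
  fixes r s t :: nat and A B C A' B' C' :: "nat list" and d :: nat
  assumes "1 \<le> r" and "r \<le> s" and "s \<le> t"
    and "(A, B, C, d) \<in> e3c_verts r s t" and "(A', B', C', d) \<in> e3c_verts r s t"
    and "A \<noteq> A'" and "B \<noteq> B'" and "C \<noteq> C'"
  shows "\<exists>Ps :: e3c_vertex list list. length Ps = 2 * r + 2 \<and> distinct Ps \<and>
           (\<forall>p \<in> set Ps. e3c_path r s t (A, B, C, d) (A', B', C', d) p \<and>
                          path_len p \<le> r + s + t + 4) \<and>
           (\<forall>i < length Ps. \<forall>j < length Ps. i \<noteq> j \<longrightarrow> internally_disjoint (Ps ! i) (Ps ! j))"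
proof -
  let ?u = "(A, B, C, d)" and ?v = "(A', B', C', d)" and ?L = "r + s + t + 4"
  have tern: "tern_str r A" "tern_str s B" "tern_str t C"
      "tern_str r A'" "tern_str s B'" "tern_str t C'"
    and "d < 3"
    using assms(4,5) by (simp_all add: e3c_verts_def)
  then obtain Ms where "2 * r + 2 \<le> length Ms" "path_interiors r s t ?u ?v ?L Ms"
    using path_interiors_exist[OF tern assms(6-8)] assms(2,3) by blast
  then show ?thesis
    using disjoint_paths_of_interiors[OF path_interiors_take[of r s t ?u ?v ?L Ms "2 * r + 2"]]
    by simp
qed

end
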